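(* Let $\lambda\in\mathbb{R}$ with $\lambda\notin\Sigma_0$, and let $\psi_2$ be the solution on $[0,1]$ of $-a\psi''+q_0\psi=\lambda\psi$ with $\psi_2(0)-\rho\,\psi_2'(0)=0$ and $\psi_2(1)+\rho\,\psi_2'(1)=1$. Then $\psi_2'(0)\neq 0$, and $\lambda\in\bigcup_{\Theta\in[-\pi,\pi]^2}\sigma(\mathcal{A}^\Theta)$ (i.e. $\lambda\in\sigma(\mathcal A)$) if and only if there exists $(\theta_1,\theta_2)\in[-\pi,\pi]^2$ such that $$\frac{\psi_2'(1)}{\psi_2'(0)}-\frac{\lambda m}{3a\,\psi_2'(0)}=\pm\frac{|S(\theta_1,\theta_2)|}{3}$$ for one choice of the sign $\pm$.
   Context: Fix $a>0$, $\kappa^{-1}\ge 0$ and $m\ge 0$, and put $\rho:=a\kappa^{-1}\ge 0$. Let $q_0\in L^\infty(0,1)$ be real-valued and symmetric: $q_0(x)=q_0(1-x)$. The hexagonal lattice $G$ (all edges of length $1$, identified with $[0,1]$ by arc length; the potential on every edge is $q_0$, which is orientation-independent by symmetry) is periodic under $\mathbb{Z}b_1+\mathbb{Z}b_2$; a fundamental domain has two vertices $v_1,v_2$ and three edges $e_1,e_2,e_3$, each parametrized by $[0,1]$ from $v_1$ ($x=0$) to a translate of $v_2$ ($x=1$). The Hamiltonian $\mathcal{A}$ acts as $u_e\mapsto -au_e''+q_0u_e$ on edges, with vertex conditions at every vertex $v$ (with $\partial_n u_e(v)$ the outward derivative of $u_e$ at its endpoint $v$, i.e. $-u_e'(0)$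 at $x=0$ and $u_e'(1)$ at $x=1$): there is $\omega_v\in\mathbb{C}$ with $u_e(v)+\rho\,\partial_nu_e(v)=\omega_v$ for all edges $e\ni v$ (semi-rigidity), and $a\sum_{e\ni v}\partial_nu_e(v)=\lambda m\,\omega_v$ (net-force balance). By Floquet–Bloch theory $\sigma(\mathcal A)=\bigcup_{\Theta\in[-\pi,\pi]^2}\sigma(\mathcal A^\Theta)$, where for $\Theta=(\theta_1,\theta_2)$, a real $\lambda$ belongs to $\sigma(\mathcal{A}^\Theta)$ iff there exist $u_1,u_2,u_3\in H^2(0,1)$ and $\omega_0,\omega_1\in\mathbb{C}$, not all zero, with $-au_j''+q_0u_j=\lambda u_j$ ($j=1,2,3$) and $u_1(0)-\rho u_1'(0)=u_2(0)-\rho u_2'(0)=u_3(0)-\rho u_3'(0)=\omega_0$, $-a(u_1'(0)+u_2'(0)+u_3'(0))=\lambda m\,\omega_0$, $u_1(1)+\rho u_1'(1)=e^{i\theta_1}(u_2(1)+\rho u_2'(1))=e^{i\theta_2}(u_3(1)+\rho u_3'(1))=\omega_1$, $a(u_1'(1)+e^{i\theta_1}u_2'(1)+e^{i\theta_2}u_3'(1))=\lambda m\,\omega_1$. $S(\theta_1,\theta_2):=1+e^{-i\theta_1}+e^{-i\theta_2}$. $\Sigma_0$ is the set of $\lambda\in\mathbb{R}$ for which $-au''+q_0u=\lambda u$ on $(0,1)$ with $u(0)-\rho u'(0)=0$, $u(1)+\rho u'(1)=0$ has a nontrivial solution. *)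

theory Defs
  imports "HOL-Analysis.Analysis"
begin

text \<open>u (with derivative du) solves  -a u'' + q0 u = lam u  on [0,1] in the H^2 sense:
  u is differentiable on [0,1] with derivative du, and du is the indefinite
  integral of ((q0 - lam)/a) u, i.e. du is absolutely continuous with
  du'' = ((q0 - lam)/a) u almost everywhere.\<close>
definition is_sol :: "real \<Rightarrow> (real \<Rightarrow> real) \<Rightarrow> real \<Rightarrow> (real \<Rightarrow> complex) \<Rightarrow> (real \<Rightarrow> complex) \<Rightarrow> bool" where
  "is_sol a q0 lam u du \<longleftrightarrow>
     (\<forall>x\<in>{0..1}. (u has_vector_derivative du x) (at x within {0..1})) \<and>
     (\<forall>x\<in>{0..1}. ((\<lambda>t. complex_of_real ((q0 t - lam) / a) * u t) has_integral (du x - du 0)) {0..x})"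

text \<open>Sigma_0 (with rho = a kappa^{-1}).\<close>
definition Sigma0 :: "real \<Rightarrow> real \<Rightarrow> (real \<Rightarrow> real) \<Rightarrow> real set" where
  "Sigma0 a rho q0 = {lam. \<exists>u du. is_sol a q0 lam u du \<and>
       u 0 - complex_of_real rho * du 0 = 0 \<and> u 1 + complex_of_real rho * du 1 = 0 \<and>
       (\<exists>x\<in>{0..1}. u x \<noteq> 0)}"

definition S :: "real \<Rightarrow> real \<Rightarrow> complex" where
  "S th1 th2 = 1 + exp (- \<i> * complex_of_real th1) + exp (- \<i> * complex_of_real th2)"

definition in_spec_theta :: "real \<Rightarrow> real \<Rightarrow> real \<Rightarrow> (real \<Rightarrow> real) \<Rightarrow> real \<Rightarrow> real \<Rightarrow> real \<Rightarrow> bool" where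
  "in_spec_theta a rho m q0 th1 th2 lam \<longleftrightarrow>
     (\<exists>u1 du1 u2 du2 u3 du3 (w0::complex) (w1::complex).
        is_sol a q0 lam u1 du1 \<and> is_sol a q0 lam u2 du2 \<and> is_sol a q0 lam u3 du3 \<and>
        ((\<exists>x\<in>{0..1}. u1 x \<noteq> 0 \<or> u2 x \<noteq> 0 \<or> u3 x \<noteq> 0) \<or> w0 \<noteq> 0 \<or> w1 \<noteq> 0) \<and>
        u1 0 - complex_of_real rho * du1 0 = w0 \<and>
        u2 0 - complex_of_real rho * du2 0 = w0 \<and>
        u3 0 - complex_of_real rho * du3 0 = w0 \<and>
        - complex_of_real a * (du1 0 + du2 0 + du3 0) = complex_of_real (lam * m) * w0 \<and>
        u1 1 + complex_of_real rho * du1 1 = w1 \<and>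
        exp (\<i> * complex_of_real th1) * (u2 1 + complex_of_real rho * du2 1) = w1 \<and>
        exp (\<i> * complex_of_real th2) * (u3 1 + complex_of_real rho * du3 1) = w1 \<and>
        complex_of_real a * (du1 1 + exp (\<i> * complex_of_real th1) * du2 1
            + exp (\<i> * complex_of_real th2) * du3 1) = complex_of_real (lam * m) * w1)"

end

theory Submission
  imports Defs
begin

text \<open>Since \<open>lam\<close> is not in \<open>Sigma_0\<close>, a solution on an edge is determined by its semi-rigidity
  values \<open>w0 = u(0) - rho u'(0)\<close> and \<open>w1 = u(1) + rho u'(1)\<close>: it equals \<open>w0 psi1 + w1 psi2\<close>, and by
  the symmetry of \<open>q0\<close> one may take \<open>psi1(x) = psi2(1 - x)\<close>. On the three edges of a fundamental domain
  the balance conditions at the two vertices then become the system \<open>P w0 = A S w1\<close>,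
  \<open>P w1 = A cnj(S) w0\<close> with \<open>P = 3 a psi2'(1) - lam m\<close> and \<open>A = a psi2'(0)\<close>, which has a nontrivial
  solution iff \<open>P^2 = A^2 |S|^2\<close>, i.e. \<open>P = +-A |S|\<close>. Finally \<open>psi2'(0) \<noteq> 0\<close>, for otherwise \<open>psi2\<close>
  has zero initial data and vanishes by a Gronwall-type estimate, contradicting \<open>psi2(1) + rho psi2'(1) = 1\<close>.\<close>

lemma AE_lebesgue_on_imp_negligible:
  assumes "A \<in> sets lebesgue" and "AE x in lebesgue_on A. P x"
  obtains N where "negligible N" and "\<forall>x\<in>A - N. P x"
proof -
  have "AE x in lebesgue. x \<in> A \<longrightarrow> P x"
    using assms by (subst (asm) AE_restrict_space_iff) auto
  then obtain N where "N \<in> null_sets lebesgue" and "{x. \<not> (x \<in> A \<longrightarrow> P x)} \<subseteq> N"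
    unfolding eventually_ae_filter by auto
  then show ?thesis
    using that negligible_iff_null_sets by blast
qed

lemma has_integral_norm_bound_integral:
  fixes f :: "'n::euclidean_space \<Rightarrow> 'a::banach"
  assumes "(f has_integral i) A" and "(g has_integral j) A" and "\<And>x. x \<in> A \<Longrightarrow> norm (f x) \<le> g x"
  shows "norm i \<le> j"
  using integral_norm_bound_integral[of f A g] assms by (metis has_integral_integrable integral_unique)

lemma has_integral_exp_scaled:
  fixes c x :: real
  assumes "c \<noteq> 0" and "0 \<le> x"
  shows "((\<lambda>t. exp (c * t)) has_integral (exp (c * x) - 1) / c) {0..x}"
proof -
  have "((\<lambda>t. exp (c * t) / c) has_vector_derivative exp (c * t)) (at t within {0..x})" for t
    using assms unfolding has_real_derivative_iff_has_vector_derivative[symmetric]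
    by (auto intro!: derivative_eq_intros)
  from fundamental_theorem_of_calculus[OF assms(2) this]
  show ?thesis
    by (simp add: diff_divide_distrib)
qed

lemma has_integral_reflect_unit_interval:
  fixes g :: "real \<Rightarrow> 'a::banach"
  assumes g: "\<And>y. y \<in> {0..1} \<Longrightarrow> (g has_integral (F y - F 0)) {0..y}" and x: "x \<in> {0..1}"
  shows "((\<lambda>s. g (1 - s)) has_integral (F 1 - F (1 - x))) {0..x}"
proof -
  have "g integrable_on {0..1}"
    using g[of 1] by auto
  then have "g integrable_on {1 - x..1}"
    by (rule integrable_subinterval_real) (use x in auto)
  then obtain J where J: "(g has_integral J) {1 - x..1}"
    by blast
  have "(g has_integral (F (1 - x) - F 0) + J) {0..1}"
    using x by (intro has_integral_combine[OF _ _ g[of "1 - x"] J]) auto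
  from has_integral_unique[OF this g[of 1]]
  have J_eq: "J = F 1 - F (1 - x)"
    by (simp add: algebra_simps)
  have "((\<lambda>s. g (1 *\<^sub>R s + 1)) has_integral (J /\<^sub>R 1 ^ DIM(real)))
      (cbox ((1 - x - 1) /\<^sub>R 1) ((1 - 1) /\<^sub>R 1))"
    by (rule has_integral_affinity') (use J in auto)
  then have "((\<lambda>s. g (s + 1)) has_integral J) {-x..0}"
    by simp
  then have "((\<lambda>s. g (- s + 1)) has_integral J) {-0..-(-x)}"
    by (subst has_integral_reflect_real[of "\<lambda>s. g (s + 1)"]) simp
  then show ?thesis
    unfolding J_eq by simp
qed

lemma is_sol_lincomb:
  assumes "is_sol a q0 lam u du" and "is_sol a q0 lam v dv"
  shows "is_sol a q0 lam (\<lambda>x. \<alpha> * u x + \<beta> * v x) (\<lambda>x. \<alpha> * du x + \<beta> * dv x)"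
  unfolding is_sol_def
proof (intro conjI ballI)
  fix x :: real
  assume x: "x \<in> {0..1}"
  show "((\<lambda>x. \<alpha> * u x + \<beta> * v x) has_vector_derivative \<alpha> * du x + \<beta> * dv x) (at x within {0..1})"
    using assms x unfolding is_sol_def by (auto intro!: derivative_eq_intros)
  define c where "c t = complex_of_real ((q0 t - lam) / a)" for t
  have "((\<lambda>t. \<alpha> * (c t * u t) + \<beta> * (c t * v t))
      has_integral (\<alpha> * (du x - du 0) + \<beta> * (dv x - dv 0))) {0..x}"
    using assms x unfolding is_sol_def c_def by (intro has_integral_add has_integral_mult_right) auto
  moreover have "(\<lambda>t. \<alpha> * (c t * u t) + \<beta> * (c t * v t)) = (\<lambda>t. c t * (\<alpha> * u t + \<beta> * v t))"
    by (simp add: fun_eq_iff algebra_simps)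
  moreover have "\<alpha> * (du x - du 0) + \<beta> * (dv x - dv 0) = \<alpha> * du x + \<beta> * dv x - (\<alpha> * du 0 + \<beta> * dv 0)"
    by (simp add: algebra_simps)
  ultimately show "((\<lambda>t. complex_of_real ((q0 t - lam) / a) * (\<alpha> * u t + \<beta> * v t)) has_integral
      (\<alpha> * du x + \<beta> * dv x - (\<alpha> * du 0 + \<beta> * dv 0))) {0..x}"
    unfolding c_def by simp
qed

lemma is_sol_reflect:
  fixes u du :: "real \<Rightarrow> complex"
  assumes sol: "is_sol a q0 lam u du" and sym: "AE x in lebesgue_on {0..1}. q0 x = q0 (1 - x)"
  shows "is_sol a q0 lam (\<lambda>x. u (1 - x)) (\<lambda>x. - du (1 - x))"
  unfolding is_sol_def
proof (intro conjI ballI)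
  fix x :: real
  assume x: "x \<in> {0..1}"
  have flip: "((\<lambda>x. 1 - x) has_vector_derivative (-1)) (at x within {0..1})"
    by (auto intro!: derivative_eq_intros)
  have "(\<lambda>x. 1 - x) ` {0..1::real} = {0..1}"
    by simp
  then have "(u has_vector_derivative du (1 - x)) (at (1 - x) within (\<lambda>x. 1 - x) ` {0..1})"
    using sol x unfolding is_sol_def by auto
  from vector_diff_chain_within[OF flip this]
  show "((\<lambda>x. u (1 - x)) has_vector_derivative - du (1 - x)) (at x within {0..1})"
    by (simp add: o_def)
next
  fix x :: real
  assume x: "x \<in> {0..1}"
  obtain N where N: "negligible N" "\<forall>x\<in>{0..1} - N. q0 x = q0 (1 - x)"
    using AE_lebesgue_on_imp_negligible[OF _ sym] by (metis sets_lborel sets_completionI_sets atLeastAtMost_borel)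
  define g where "g t = complex_of_real ((q0 t - lam) / a) * u t" for t
  have "y \<in> {0..1} \<Longrightarrow> (g has_integral (du y - du 0)) {0..y}" for y
    using sol unfolding is_sol_def g_def by auto
  from has_integral_reflect_unit_interval[OF this x]
  have reflected: "((\<lambda>s. g (1 - s)) has_integral (- du (1 - x) - - du (1 - 0))) {0..x}"
    by (simp add: algebra_simps)
  show "((\<lambda>t. complex_of_real ((q0 t - lam) / a) * u (1 - t)) has_integral - du (1 - x) - - du (1 - 0)) {0..x}"
  proof (rule has_integral_spike[OF N(1) _ reflected])
    fix t
    assume "t \<in> {0..x} - N"
    then have "q0 t = q0 (1 - t)"
      using N(2) x by auto
    then show "complex_of_real ((q0 t - lam) / a) * u (1 - t) = g (1 - t)"
      by (simp add: g_def)
  qed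
qed

lemma is_sol_continuous:
  assumes "is_sol a q0 lam u du"
  shows "continuous_on {0..1} u" and "continuous_on {0..1} du"
proof -
  show "continuous_on {0..1} u"
    using assms unfolding is_sol_def by (intro continuous_on_vector_derivative) auto
  define h where "h t = complex_of_real ((q0 t - lam) / a) * u t" for t
  have h: "x \<in> {0..1} \<Longrightarrow> (h has_integral (du x - du 0)) {0..x}" for x
    using assms unfolding is_sol_def h_def by auto
  have "h integrable_on {0..1}"
    using h[of 1] by auto
  then have "continuous_on {0..1} (\<lambda>x. integral {0..x} h + du 0)"
    by (intro continuous_intros indefinite_integral_continuous_1)
  moreover have "x \<in> {0..1} \<Longrightarrow> integral {0..x} h + du 0 = du x" for x
    using integral_unique[OF h] by simp
  ultimately show "continuous_on {0..1} du"
    by (rule continuous_on_eq)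
qed

lemma is_sol_vanishing_imp_deriv_zero:
  assumes "is_sol a q0 lam u du" and "\<forall>x\<in>{0..1}. u x = 0" and "x \<in> {0..1}"
  shows "du x = 0"
proof -
  have "(u has_vector_derivative du x) (at x within {0..1})"
    using assms unfolding is_sol_def by auto
  moreover have "(u has_vector_derivative 0) (at x within {0..1})"
    by (rule has_vector_derivative_transform[of x _ _ "\<lambda>_. 0"]) (use assms in auto)
  ultimately show ?thesis
    using vector_derivative_unique_within_closed_interval[of 0 1 x u "du x" 0] assms by auto
qed

lemma is_sol_deriv_has_integral:
  assumes sol: "is_sol a q0 lam u du" and x: "x \<in> {0..1}"
  shows "(du has_integral (u x - u 0)) {0..x}"
proof (rule fundamental_theorem_of_calculus)
  show "0 \<le> x"
    using x by auto
  fix t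
  assume "t \<in> {0..x}"
  then have "(u has_vector_derivative du t) (at t within {0..1})"
    using sol x unfolding is_sol_def by auto
  moreover have "{0..x} \<subseteq> {0..1}"
    using x by auto
  ultimately show "(u has_vector_derivative du t) (at t within {0..x})"
    by (rule has_vector_derivative_within_subset)
qed

lemma is_sol_volterra_estimate:
  fixes u du :: "real \<Rightarrow> complex" and g :: "real \<Rightarrow> real"
  assumes sol: "is_sol a q0 lam u du" and init: "u 0 = 0" "du 0 = 0"
    and N: "negligible N" and K: "0 \<le> K" "\<forall>t\<in>{0..1} - N. \<bar>(q0 t - lam) / a\<bar> \<le> K"
    and x: "x \<in> {0..1}" and g: "(g has_integral I) {0..x}"
    and bound: "\<forall>t\<in>{0..x}. norm (u t) \<le> g t \<and> norm (du t) \<le> g t"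
  shows "norm (u x) + norm (du x) \<le> (1 + K) * I"
proof -
  define c where "c t = complex_of_real ((q0 t - lam) / a)" for t
  have sub: "{0..x} \<subseteq> {0..1}"
    using x by auto
  have "(du has_integral u x) {0..x}"
    using is_sol_deriv_has_integral[OF sol x] init by simp
  from has_integral_norm_bound_integral[OF this g]
  have u_bound: "norm (u x) \<le> I"
    using bound by auto
  define h where "h t = (if t \<in> N then 0 else c t * u t)" for t
  have "((\<lambda>t. c t * u t) has_integral du x) {0..x}"
    using sol x init unfolding is_sol_def c_def by auto
  from has_integral_spike[OF N _ this]
  have "(h has_integral du x) {0..x}"
    by (simp add: h_def)
  moreover have "((\<lambda>t. K * g t) has_integral K * I) {0..x}"
    using g by (rule has_integral_mult_right)
  moreover have "norm (h t) \<le> K * g t" if t: "t \<in> {0..x}" for t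
  proof (cases "t \<in> N")
    case True
    have "0 \<le> g t"
      using bound t norm_ge_zero order_trans by blast
    with True show ?thesis
      using K(1) by (simp add: h_def)
  next
    case False
    then have "norm (h t) = norm (c t) * norm (u t)"
      by (simp add: h_def norm_mult)
    also have "\<dots> \<le> K * g t"
    proof (rule mult_mono)
      show "norm (c t) \<le> K"
        unfolding c_def norm_of_real using K(2) t sub False by blast
    qed (use K(1) bound t in auto)
    finally show ?thesis .
  qed
  ultimately have "norm (du x) \<le> K * I"
    by (rule has_integral_norm_bound_integral)
  with u_bound show ?thesis
    by (simp add: algebra_simps)
qed

lemma AE_bounded_imp_coefficient_bound:
  fixes q0 :: "real \<Rightarrow> real" and a lam B :: real
  assumes "AE x in lebesgue_on {0..1}. \<bar>q0 x\<bar> \<le> B"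
  obtains N K where "negligible N" and "0 \<le> K" and "\<forall>t\<in>{0..1} - N. \<bar>(q0 t - lam) / a\<bar> \<le> K"
proof -
  have "{0..1::real} \<in> sets lebesgue"
    by (metis sets_lborel sets_completionI_sets atLeastAtMost_borel)
  then obtain N where N: "negligible N" "\<forall>x\<in>{0..1} - N. \<bar>q0 x\<bar> \<le> B"
    using AE_lebesgue_on_imp_negligible[OF _ assms] by blast
  have bound: "\<bar>(q0 t - lam) / a\<bar> \<le> (\<bar>B\<bar> + \<bar>lam\<bar>) / \<bar>a\<bar>" if "t \<in> {0..1} - N" for t
  proof -
    have "\<bar>q0 t\<bar> \<le> B"
      using N(2) that by blast
    then have "\<bar>q0 t - lam\<bar> \<le> \<bar>B\<bar> + \<bar>lam\<bar>"
      by arith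
    then show ?thesis
      unfolding abs_divide by (rule divide_right_mono) simp
  qed
  show ?thesis
  proof (rule that[OF N(1)])
    show "0 \<le> (\<bar>B\<bar> + \<bar>lam\<bar>) / \<bar>a\<bar>"
      by simp
  qed (use bound in blast)
qed

lemma is_sol_exp_weighted_bound:
  fixes u du :: "real \<Rightarrow> complex"
  assumes sol: "is_sol a q0 lam u du" and init: "u 0 = 0" "du 0 = 0"
    and N: "negligible N" and K: "0 \<le> K" "\<forall>t\<in>{0..1} - N. \<bar>(q0 t - lam) / a\<bar> \<le> K"
    and bound: "\<forall>t\<in>{0..1}. norm (u t) \<le> G * exp (2 * (1 + K) * t) \<and> norm (du t) \<le> G * exp (2 * (1 + K) * t)"
    and x: "x \<in> {0..1}"
  shows "norm (u x) + norm (du x) \<le> G / 2 * (exp (2 * (1 + K) * x) - 1)"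
proof -
  have "((\<lambda>t. G * exp (2 * (1 + K) * t)) has_integral G * ((exp (2 * (1 + K) * x) - 1) / (2 * (1 + K)))) {0..x}"
    using x K(1) by (intro has_integral_mult_right has_integral_exp_scaled) auto
  from is_sol_volterra_estimate[OF sol init N K x this]
  have "norm (u x) + norm (du x) \<le> (1 + K) * (G * ((exp (2 * (1 + K) * x) - 1) / (2 * (1 + K))))"
    using bound x by auto
  also have "\<dots> = G / 2 * (exp (2 * (1 + K) * x) - 1)"
  proof -
    have "1 + K \<noteq> 0"
      using K(1) by simp
    then show ?thesis
      by (simp add: field_simps)
  qed
  finally show ?thesis .
qed

lemma is_sol_initial_zero_imp_zero:
  fixes u du :: "real \<Rightarrow> complex"
  assumes sol: "is_sol a q0 lam u du" and init: "u 0 = 0" "du 0 = 0"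
    and bounded: "AE x in lebesgue_on {0..1}. \<bar>q0 x\<bar> \<le> B"
  shows "\<forall>x\<in>{0..1}. u x = 0 \<and> du x = 0"
proof -
  obtain N K where N: "negligible N" and K: "0 \<le> K" "\<forall>t\<in>{0..1} - N. \<bar>(q0 t - lam) / a\<bar> \<le> K"
    using AE_bounded_imp_coefficient_bound[OF bounded] .
  define L where "L = 2 * (1 + K)"
  \<comment> \<open>with the weight \<open>exp (- L x)\<close> the Volterra estimate becomes a contraction by the factor \<open>1/2\<close>\<close>
  define f where "f x = (norm (u x) + norm (du x)) * exp (- (L * x))" for x
  have "continuous_on {0..1} f"
    unfolding f_def using is_sol_continuous[OF sol] by (intro continuous_intros)
  then obtain x0 where x0: "x0 \<in> {0..1}" "\<forall>y\<in>{0..1}. f y \<le> f x0"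
    using continuous_attains_sup[of "{0..1}" f] by auto
  define G where "G = f x0"
  have G0: "0 \<le> G"
    by (simp add: G_def f_def)
  have "norm (u t) + norm (du t) \<le> G * exp (L * t)" if "t \<in> {0..1}" for t
  proof -
    have "(norm (u t) + norm (du t)) * exp (- (L * t)) \<le> G"
      using x0 that by (auto simp: f_def G_def)
    then show ?thesis
      by (simp add: exp_minus field_simps)
  qed
  then have bound: "\<forall>t\<in>{0..1}. norm (u t) \<le> G * exp (L * t) \<and> norm (du t) \<le> G * exp (L * t)"
    by (smt (verit) norm_ge_zero)
  have "f x0 \<le> G / 2"
  proof -
    have "f x0 \<le> G / 2 * (exp (L * x0) - 1) * exp (- (L * x0))"
      unfolding f_def using is_sol_exp_weighted_bound[OF sol init N K _ x0(1)] bound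
      by (intro mult_right_mono) (simp_all add: L_def)
    also have "\<dots> = G / 2 * (1 - exp (- (L * x0)))"
      by (simp add: exp_minus field_simps)
    also have "\<dots> \<le> G / 2"
      using G0 by (simp add: mult_left_le)
    finally show ?thesis .
  qed
  then have "G = 0"
    using G0 by (simp add: G_def)
  then have "f x \<le> 0" if "x \<in> {0..1}" for x
    using x0 that by (auto simp: G_def)
  then show ?thesis
    unfolding f_def by (smt (verit, best) exp_gt_zero mult_le_0_iff norm_ge_zero norm_le_zero_iff)
qed

lemma cnj_S: "cnj (S th1 th2) = 1 + exp (\<i> * of_real th1) + exp (\<i> * of_real th2)"
  by (simp add: S_def exp_cnj)

lemma exp_i_mult_exp_minus_i: "exp (\<i> * of_real t) * exp (- \<i> * of_real t) = 1"
  by (simp add: exp_add[symmetric])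

locale robin_basis =
  fixes a rho :: real and q0 :: "real \<Rightarrow> real" and lam :: real and p1 dp1 p2 dp2 :: "real \<Rightarrow> complex"
  assumes not_in_Sigma0: "lam \<notin> Sigma0 a rho q0"
    and p1: "is_sol a q0 lam p1 dp1" "p1 0 - of_real rho * dp1 0 = 1" "p1 1 + of_real rho * dp1 1 = 0"
    and p2: "is_sol a q0 lam p2 dp2" "p2 0 - of_real rho * dp2 0 = 0" "p2 1 + of_real rho * dp2 1 = 1"
begin

definition comb :: "complex \<Rightarrow> complex \<Rightarrow> real \<Rightarrow> complex" where
  "comb w0 w1 x = w0 * p1 x + w1 * p2 x"

definition dcomb :: "complex \<Rightarrow> complex \<Rightarrow> real \<Rightarrow> complex" where
  "dcomb w0 w1 x = w0 * dp1 x + w1 * dp2 x"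

lemma is_sol_comb: "is_sol a q0 lam (comb w0 w1) (dcomb w0 w1)"
  unfolding comb_def[abs_def] dcomb_def[abs_def] by (intro is_sol_lincomb p1(1) p2(1))

lemma comb_robin_traces:
  shows "comb w0 w1 0 - of_real rho * dcomb w0 w1 0 = w0"
    and "comb w0 w1 1 + of_real rho * dcomb w0 w1 1 = w1"
proof -
  have "comb w0 w1 0 - of_real rho * dcomb w0 w1 0
      = w0 * (p1 0 - of_real rho * dp1 0) + w1 * (p2 0 - of_real rho * dp2 0)"
    by (simp add: comb_def dcomb_def algebra_simps)
  then show "comb w0 w1 0 - of_real rho * dcomb w0 w1 0 = w0"
    using p1 p2 by simp
  have "comb w0 w1 1 + of_real rho * dcomb w0 w1 1
      = w0 * (p1 1 + of_real rho * dp1 1) + w1 * (p2 1 + of_real rho * dp2 1)"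
    by (simp add: comb_def dcomb_def algebra_simps)
  then show "comb w0 w1 1 + of_real rho * dcomb w0 w1 1 = w1"
    using p1 p2 by simp
qed

lemma is_sol_eq_comb:
  assumes u: "is_sol a q0 lam u du" and x: "x \<in> {0..1}"
  defines "w0 \<equiv> u 0 - of_real rho * du 0" and "w1 \<equiv> u 1 + of_real rho * du 1"
  shows "u x = comb w0 w1 x \<and> du x = dcomb w0 w1 x"
proof -
  define w dw where "w x = u x - comb w0 w1 x" and "dw x = du x - dcomb w0 w1 x" for x
  have w_eq: "w = (\<lambda>x. 1 * u x + (-1) * comb w0 w1 x)"
    and dw_eq: "dw = (\<lambda>x. 1 * du x + (-1) * dcomb w0 w1 x)"
    by (simp_all add: w_def dw_def fun_eq_iff)
  have "is_sol a q0 lam w dw"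
    unfolding w_eq dw_eq by (intro is_sol_lincomb u is_sol_comb)
  moreover have "w 0 - of_real rho * dw 0 = 0" and "w 1 + of_real rho * dw 1 = 0"
    using comb_robin_traces[of w0 w1] by (simp_all add: w_def dw_def w0_def w1_def algebra_simps)
  ultimately have "\<forall>x\<in>{0..1}. w x = 0"
    using not_in_Sigma0 unfolding Sigma0_def by blast
  with is_sol_vanishing_imp_deriv_zero[OF \<open>is_sol a q0 lam w dw\<close> _ x]
  show ?thesis
    using x by (simp add: w_def dw_def)
qed

definition vertex_balance :: "real \<Rightarrow> real \<Rightarrow> real \<Rightarrow> complex \<Rightarrow> complex \<Rightarrow> bool" where
  "vertex_balance m th1 th2 w0 w1 \<longleftrightarrow>
     - of_real a * (3 * dp1 0 * w0 + S th1 th2 * dp2 0 * w1) = of_real (lam * m) * w0 \<and>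
     of_real a * (cnj (S th1 th2) * dp1 1 * w0 + 3 * dp2 1 * w1) = of_real (lam * m) * w1"

text \<open>In the quasi-periodic problem the edges \<open>e1, e2, e3\<close> carry \<open>comb w0 w1\<close>, \<open>comb w0 (w1 * exp (- i th1))\<close>
  and \<open>comb w0 (w1 * exp (- i th2))\<close>; below are the derivative sums entering the two balance conditions.\<close>

lemma dcomb_sum_left:
  "dcomb w0 w1 0 + dcomb w0 (w1 * exp (- \<i> * of_real th1)) 0 + dcomb w0 (w1 * exp (- \<i> * of_real th2)) 0
    = 3 * dp1 0 * w0 + S th1 th2 * dp2 0 * w1"
  by (simp add: dcomb_def S_def algebra_simps)

lemma dcomb_sum_right:
  "dcomb w0 w1 1 + exp (\<i> * of_real th1) * dcomb w0 (w1 * exp (- \<i> * of_real th1)) 1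
     + exp (\<i> * of_real th2) * dcomb w0 (w1 * exp (- \<i> * of_real th2)) 1
    = cnj (S th1 th2) * dp1 1 * w0 + 3 * dp2 1 * w1"
proof -
  define e1 e2 f1 f2 where "e1 = exp (\<i> * of_real th1)" and "e2 = exp (\<i> * of_real th2)"
    and "f1 = exp (- \<i> * of_real th1)" and "f2 = exp (- \<i> * of_real th2)"
  have "dcomb w0 w1 1 + e1 * dcomb w0 (w1 * f1) 1 + e2 * dcomb w0 (w1 * f2) 1
      = (1 + e1 + e2) * dp1 1 * w0 + (1 + e1 * f1 + e2 * f2) * dp2 1 * w1"
    by (simp add: dcomb_def algebra_simps)
  also have "\<dots> = cnj (S th1 th2) * dp1 1 * w0 + 3 * dp2 1 * w1"
    unfolding e1_def e2_def f1_def f2_def exp_i_mult_exp_minus_i cnj_S by simp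
  finally show ?thesis
    by (simp add: e1_def e2_def f1_def f2_def)
qed

lemma in_spec_theta_imp_vertex_balance:
  assumes "in_spec_theta a rho m q0 th1 th2 lam"
  obtains w0 w1 where "w0 \<noteq> 0 \<or> w1 \<noteq> 0" and "vertex_balance m th1 th2 w0 w1"
proof -
  define e1 e2 f1 f2 where "e1 = exp (\<i> * of_real th1)" and "e2 = exp (\<i> * of_real th2)"
    and "f1 = exp (- \<i> * of_real th1)" and "f2 = exp (- \<i> * of_real th2)"
  obtain u1 du1 u2 du2 u3 du3 w0 w1 where
    sol: "is_sol a q0 lam u1 du1" "is_sol a q0 lam u2 du2" "is_sol a q0 lam u3 du3" and
    nontrivial: "(\<exists>x\<in>{0..1}. u1 x \<noteq> 0 \<or> u2 x \<noteq> 0 \<or> u3 x \<noteq> 0) \<or> w0 \<noteq> 0 \<or> w1 \<noteq> 0" and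
    left: "u1 0 - of_real rho * du1 0 = w0" "u2 0 - of_real rho * du2 0 = w0"
      "u3 0 - of_real rho * du3 0 = w0" and
    balance0: "- of_real a * (du1 0 + du2 0 + du3 0) = of_real (lam * m) * w0" and
    right: "u1 1 + of_real rho * du1 1 = w1" "e1 * (u2 1 + of_real rho * du2 1) = w1"
      "e2 * (u3 1 + of_real rho * du3 1) = w1" and
    balance1: "of_real a * (du1 1 + e1 * du2 1 + e2 * du3 1) = of_real (lam * m) * w1"
    using assms unfolding in_spec_theta_def e1_def[symmetric] e2_def[symmetric] by blast
  have "e1 * f1 = 1" "e2 * f2 = 1"
    unfolding e1_def e2_def f1_def f2_def by (rule exp_i_mult_exp_minus_i)+
  then have right': "u2 1 + of_real rho * du2 1 = w1 * f1" "u3 1 + of_real rho * du3 1 = w1 * f2"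
    using right(2,3) by (metis mult.commute mult.left_neutral mult.assoc)+
  have u1: "u1 x = comb w0 w1 x \<and> du1 x = dcomb w0 w1 x" if "x \<in> {0..1}" for x
    using is_sol_eq_comb[OF sol(1) that] unfolding left(1) right(1) .
  have u2: "u2 x = comb w0 (w1 * f1) x \<and> du2 x = dcomb w0 (w1 * f1) x" if "x \<in> {0..1}" for x
    using is_sol_eq_comb[OF sol(2) that] unfolding left(2) right'(1) .
  have u3: "u3 x = comb w0 (w1 * f2) x \<and> du3 x = dcomb w0 (w1 * f2) x" if "x \<in> {0..1}" for x
    using is_sol_eq_comb[OF sol(3) that] unfolding left(3) right'(2) .
  have "w0 \<noteq> 0 \<or> w1 \<noteq> 0"
    using nontrivial u1 u2 u3 by (auto simp: comb_def)
  moreover have "vertex_balance m th1 th2 w0 w1"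
    unfolding vertex_balance_def
    using balance0 balance1 u1 u2 u3 dcomb_sum_left[of w0 w1 th1 th2] dcomb_sum_right[of w0 w1 th1 th2]
    by (simp add: e1_def e2_def f1_def f2_def)
  ultimately show thesis
    by (rule that)
qed

lemma vertex_balance_imp_in_spec_theta:
  assumes nontrivial: "w0 \<noteq> 0 \<or> w1 \<noteq> 0" and balance: "vertex_balance m th1 th2 w0 w1"
  shows "in_spec_theta a rho m q0 th1 th2 lam"
proof -
  define e1 e2 f1 f2 where "e1 = exp (\<i> * of_real th1)" and "e2 = exp (\<i> * of_real th2)"
    and "f1 = exp (- \<i> * of_real th1)" and "f2 = exp (- \<i> * of_real th2)"
  have nontrivial': "(\<exists>x\<in>{0..1}. comb w0 w1 x \<noteq> 0 \<or> comb w0 (w1 * f1) x \<noteq> 0 \<or> comb w0 (w1 * f2) x \<noteq> 0)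
      \<or> w0 \<noteq> 0 \<or> w1 \<noteq> 0"
    using nontrivial by blast
  have "e1 * f1 = 1" "e2 * f2 = 1"
    unfolding e1_def e2_def f1_def f2_def by (rule exp_i_mult_exp_minus_i)+
  then have right: "e1 * (comb w0 (w1 * f1) 1 + of_real rho * dcomb w0 (w1 * f1) 1) = w1"
    "e2 * (comb w0 (w1 * f2) 1 + of_real rho * dcomb w0 (w1 * f2) 1) = w1"
    unfolding comb_robin_traces by (simp_all add: algebra_simps)
  have balance0: "- of_real a * (dcomb w0 w1 0 + dcomb w0 (w1 * f1) 0 + dcomb w0 (w1 * f2) 0)
      = of_real (lam * m) * w0"
    using balance unfolding vertex_balance_def f1_def f2_def dcomb_sum_left by blast
  have balance1: "of_real a * (dcomb w0 w1 1 + e1 * dcomb w0 (w1 * f1) 1 + e2 * dcomb w0 (w1 * f2) 1)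
      = of_real (lam * m) * w1"
    using balance unfolding vertex_balance_def e1_def e2_def f1_def f2_def dcomb_sum_right by blast
  show ?thesis
    unfolding in_spec_theta_def e1_def[symmetric] e2_def[symmetric]
    by (rule exI[of _ "comb w0 w1"], rule exI[of _ "dcomb w0 w1"], rule exI[of _ "comb w0 (w1 * f1)"],
        rule exI[of _ "dcomb w0 (w1 * f1)"], rule exI[of _ "comb w0 (w1 * f2)"],
        rule exI[of _ "dcomb w0 (w1 * f2)"], rule exI[of _ w0], rule exI[of _ w1])
      (intro conjI is_sol_comb nontrivial' comb_robin_traces right balance0 balance1)
qed

lemma in_spec_theta_iff_vertex_balance:
  "in_spec_theta a rho m q0 th1 th2 lam \<longleftrightarrow> (\<exists>w0 w1. (w0 \<noteq> 0 \<or> w1 \<noteq> 0) \<and> vertex_balance m th1 th2 w0 w1)"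
  by (metis in_spec_theta_imp_vertex_balance vertex_balance_imp_in_spec_theta)

end

lemma nontrivial_solution_2x2_iff:
  fixes P b c :: "'a::field"
  shows "(\<exists>w0 w1. (w0 \<noteq> 0 \<or> w1 \<noteq> 0) \<and> P * w0 = b * w1 \<and> P * w1 = c * w0) \<longleftrightarrow> P\<^sup>2 = b * c"
proof
  assume "\<exists>w0 w1. (w0 \<noteq> 0 \<or> w1 \<noteq> 0) \<and> P * w0 = b * w1 \<and> P * w1 = c * w0"
  then obtain w0 w1 where nz: "w0 \<noteq> 0 \<or> w1 \<noteq> 0" and eq0: "P * w0 = b * w1" and eq1: "P * w1 = c * w0"
    by blast
  have "P\<^sup>2 * w0 = b * (P * w1)" and "P\<^sup>2 * w1 = c * (P * w0)"
    by (simp_all add: power2_eq_square eq0 eq1 algebra_simps)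
  then have "P\<^sup>2 * w0 = (b * c) * w0" and "P\<^sup>2 * w1 = (b * c) * w1"
    by (simp_all add: eq0 eq1 algebra_simps)
  with nz show "P\<^sup>2 = b * c"
    by auto
next
  assume det: "P\<^sup>2 = b * c"
  show "\<exists>w0 w1. (w0 \<noteq> 0 \<or> w1 \<noteq> 0) \<and> P * w0 = b * w1 \<and> P * w1 = c * w0"
  proof (cases "b = 0")
    case True
    with det show ?thesis
      by (intro exI[of _ 0] exI[of _ 1]) simp
  next
    case False
    with det show ?thesis
      by (intro exI[of _ b] exI[of _ P]) (simp add: power2_eq_square mult.commute)
  qed
qed

lemma in_spec_theta_symmetric_iff:
  fixes rho :: real and psi dpsi :: "real \<Rightarrow> complex"
  assumes ns: "lam \<notin> Sigma0 a rho q0" and a: "a \<noteq> 0"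
    and sym: "AE x in lebesgue_on {0..1}. q0 x = q0 (1 - x)"
    and psi: "is_sol a q0 lam psi dpsi" "psi 0 - of_real rho * dpsi 0 = 0" "psi 1 + of_real rho * dpsi 1 = 1"
    and dpsi0: "dpsi 0 \<noteq> 0"
  shows "in_spec_theta a rho m q0 th1 th2 lam \<longleftrightarrow>
    (\<exists>s\<in>{1::real, -1}. dpsi 1 / dpsi 0 - of_real (lam * m) / (3 * of_real a * dpsi 0)
       = of_real (s * cmod (S th1 th2) / 3))"
proof -
  have reflected: "is_sol a q0 lam (\<lambda>x. psi (1 - x)) (\<lambda>x. - dpsi (1 - x))"
    "psi (1 - 0) - of_real rho * - dpsi (1 - 0) = 1" "psi (1 - 1) + of_real rho * - dpsi (1 - 1) = 0"
    using is_sol_reflect[OF psi(1) sym] psi(2,3) by simp_all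
  interpret robin_basis a rho q0 lam "\<lambda>x. psi (1 - x)" "\<lambda>x. - dpsi (1 - x)" psi dpsi
    by (rule robin_basis.intro[OF ns reflected psi])
  define z where "z = S th1 th2"
  define P where "P = 3 * of_real a * dpsi 1 - of_real (lam * m)"
  define A where "A = of_real a * dpsi 0"
  have balance_iff: "vertex_balance m th1 th2 w0 w1 \<longleftrightarrow> P * w0 = (A * z) * w1 \<and> P * w1 = (A * cnj z) * w0" for w0 w1
  proof -
    have "- of_real a * (3 * - dpsi 1 * w0 + z * dpsi 0 * w1) - of_real (lam * m) * w0
        = P * w0 - (A * z) * w1"
      and "of_real a * (cnj z * - dpsi 0 * w0 + 3 * dpsi 1 * w1) - of_real (lam * m) * w1
        = P * w1 - (A * cnj z) * w0"
      by (simp_all add: P_def A_def algebra_simps)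
    then show ?thesis
      unfolding vertex_balance_def z_def[symmetric] by (metis eq_iff_diff_eq_0 diff_0_right diff_add_cancel)
  qed
  have det: "(A * z) * (A * cnj z) = (A * of_real (cmod z))\<^sup>2"
  proof -
    have "(A * z) * (A * cnj z) = A\<^sup>2 * (z * cnj z)"
      by (simp add: power2_eq_square algebra_simps)
    then show ?thesis
      by (simp flip: complex_norm_square add: power_mult_distrib)
  qed
  have "in_spec_theta a rho m q0 th1 th2 lam \<longleftrightarrow>
      P = A * of_real (cmod z) \<or> P = - (A * of_real (cmod z))"
    unfolding in_spec_theta_iff_vertex_balance balance_iff nontrivial_solution_2x2_iff det
    by (simp add: power2_eq_iff)
  moreover have "dpsi 1 / dpsi 0 - of_real (lam * m) / (3 * of_real a * dpsi 0) = P / (3 * A)"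
    using a dpsi0 by (simp add: P_def A_def field_simps)
  moreover have "P / (3 * A) = of_real (s * cmod z / 3) \<longleftrightarrow> P = of_real s * (A * of_real (cmod z))" for s
    using a dpsi0 by (simp add: A_def nonzero_divide_eq_eq mult_ac)
  ultimately show ?thesis
    unfolding z_def by auto
qed

theorem mainTheorem1:
  fixes a kinv m lam :: real and q0 :: "real \<Rightarrow> real" and psi2 dpsi2 :: "real \<Rightarrow> complex"
  assumes "a > 0" and "kinv \<ge> 0" and "m \<ge> 0"
    and "q0 \<in> borel_measurable (lebesgue_on {0..1})"
    and "\<exists>B. AE x in lebesgue_on {0..1}. \<bar>q0 x\<bar> \<le> B"
    and "AE x in lebesgue_on {0..1}. q0 x = q0 (1 - x)"
    and "lam \<notin> Sigma0 a (a * kinv) q0"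
    and "is_sol a q0 lam psi2 dpsi2"
    and "psi2 0 - complex_of_real (a * kinv) * dpsi2 0 = 0"
    and "psi2 1 + complex_of_real (a * kinv) * dpsi2 1 = 1"
  shows "dpsi2 0 \<noteq> 0 \<and>
    ((\<exists>th1\<in>{-pi..pi}. \<exists>th2\<in>{-pi..pi}. in_spec_theta a (a * kinv) m q0 th1 th2 lam) \<longleftrightarrow>
     (\<exists>th1\<in>{-pi..pi}. \<exists>th2\<in>{-pi..pi}. \<exists>s\<in>{1::real, -1}.
        dpsi2 1 / dpsi2 0 - complex_of_real (lam * m) / (3 * complex_of_real a * dpsi2 0)
          = complex_of_real (s * cmod (S th1 th2) / 3)))"
proof -
  have dpsi2_0: "dpsi2 0 \<noteq> 0"
  proof
    assume dpsi2_0: "dpsi2 0 = 0"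
    then have "psi2 0 = 0"
      using assms(9) by simp
    moreover obtain B where "AE x in lebesgue_on {0..1}. \<bar>q0 x\<bar> \<le> B"
      using assms(5) by blast
    ultimately have "psi2 1 = 0 \<and> dpsi2 1 = 0"
      using is_sol_initial_zero_imp_zero[OF assms(8) _ dpsi2_0] by auto
    with assms(10) show False
      by simp
  qed
  have "in_spec_theta a (a * kinv) m q0 th1 th2 lam \<longleftrightarrow>
      (\<exists>s\<in>{1::real, -1}. dpsi2 1 / dpsi2 0 - complex_of_real (lam * m) / (3 * complex_of_real a * dpsi2 0)
        = complex_of_real (s * cmod (S th1 th2) / 3))" for th1 th2
    using in_spec_theta_symmetric_iff[OF assms(7) _ assms(6,8-10) dpsi2_0] assms(1) by simp
  with dpsi2_0 show ?thesis
    by simp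
qed

end
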